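(* Let $p\geq2$ and $q\in\,]1,2]$ with $\frac1p+\frac1q=1$. Let $\mathcal{C}\subset\mathbb{R}^m$ be a centrally symmetric compact convex set with nonempty interior which is $(\alpha,p)$-uniformly convex for some $\alpha>0$, i.e. $\delta_{\|\cdot\|_{\mathcal{C}}}(\epsilon)\geq\alpha\epsilon^p$ for all $\epsilon\in[0,2]$. Let $\mathcal{X}\subset\mathbb{R}^m$ with $D=\sup_{x\in\mathcal{X}}\|x\|_{\mathcal{C}^\circ}<\infty$, and consider the class $\mathcal{F}_{\mathcal{C}}=\{x\in\mathcal{X}\mapsto\langle x,w\rangle:\|w\|_{\mathcal{C}}\leq1\}$. Then there exists $C>0$, depending only on $p$ and $\alpha$, such that for every $n\geq1$ and every distribution $\mu$ on $\mathcal{X}$, $R_n(\mathcal{F}_{\mathcal{C}})\leq\frac{C^{1/q}D}{n^{1/p}}$.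
   Context: $\|x\|_{\mathcal{C}}=\inf\{\lambda\geq0:x\in\lambda\mathcal{C}\}$ is the gauge (a norm), $\mathcal{C}^\circ=\{d:\langle x,d\rangle\leq1\ \forall x\in\mathcal{C}\}$ the polar and $\|\cdot\|_{\mathcal{C}^\circ}$ the dual norm of $\|\cdot\|_{\mathcal{C}}$. The modulus of convexity is $\delta_{\|\cdot\|_{\mathcal{C}}}(\epsilon)=\inf\{1-\|(x+y)/2\|_{\mathcal{C}}:\|x\|_{\mathcal{C}}=\|y\|_{\mathcal{C}}=1,\|x-y\|_{\mathcal{C}}\geq\epsilon\}$. For a class $\mathcal{F}$ of functions $\mathcal{X}\to\mathbb{R}$, the Rademacher constant is $R_n(\mathcal{F})=\mathbb{E}_{(\epsilon_i),(x_i)}\big[\sup_{f\in\mathcal{F}}\big|\frac1n\sum_{i=1}^nf(x_i)\epsilon_i\big|\big]$, where $x_1,\dots,x_n$ are i.i.d. from $\mu$ and $\epsilon_1,\dots,\epsilon_n$ are i.i.d. uniform on $\{-1,+1\}$, independent of the $x_i$. *)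

theory Defs
  imports "HOL-Analysis.Analysis" "HOL-Probability.Probability"
begin

text \<open>R^m is represented as the set of real sequences vanishing from index m on,
  so that the dimension m can be quantified inside the formula.  The topology is
  the product topology on nat => real, which restricts to the Euclidean one on vec m.\<close>

definition vec :: "nat \<Rightarrow> (nat \<Rightarrow> real) set" where
  "vec m = {x. \<forall>i. m \<le> i \<longrightarrow> x i = 0}"

definition ip :: "nat \<Rightarrow> (nat \<Rightarrow> real) \<Rightarrow> (nat \<Rightarrow> real) \<Rightarrow> real" where
  "ip m x y = (\<Sum>i<m. x i * y i)"

definition vscale :: "real \<Rightarrow> (nat \<Rightarrow> real) \<Rightarrow> (nat \<Rightarrow> real)" where
  "vscale t x = (\<lambda>i. t * x i)"

definition vadd :: "(nat \<Rightarrow> real) \<Rightarrow> (nat \<Rightarrow> real) \<Rightarrow> (nat \<Rightarrow> real)" where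
  "vadd x y = (\<lambda>i. x i + y i)"

definition vsub :: "(nat \<Rightarrow> real) \<Rightarrow> (nat \<Rightarrow> real) \<Rightarrow> (nat \<Rightarrow> real)" where
  "vsub x y = (\<lambda>i. x i - y i)"

definition vconvex :: "(nat \<Rightarrow> real) set \<Rightarrow> bool" where
  "vconvex C \<longleftrightarrow> (\<forall>x\<in>C. \<forall>y\<in>C. \<forall>t::real. 0 \<le> t \<and> t \<le> 1 \<longrightarrow>
      vadd (vscale (1 - t) x) (vscale t y) \<in> C)"

definition centrally_symmetric :: "(nat \<Rightarrow> real) set \<Rightarrow> bool" where
  "centrally_symmetric C \<longleftrightarrow> (\<forall>x\<in>C. vscale (-1) x \<in> C)"

definition gauge :: "(nat \<Rightarrow> real) set \<Rightarrow> (nat \<Rightarrow> real) \<Rightarrow> real" where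
  "gauge C x = Inf {t. 0 \<le> t \<and> x \<in> vscale t ` C}"

definition polar :: "nat \<Rightarrow> (nat \<Rightarrow> real) set \<Rightarrow> (nat \<Rightarrow> real) set" where
  "polar m C = {d \<in> vec m. \<forall>x\<in>C. ip m x d \<le> 1}"

definition modulus_convexity :: "nat \<Rightarrow> (nat \<Rightarrow> real) set \<Rightarrow> real \<Rightarrow> real" where
  "modulus_convexity m C \<epsilon> = Inf {1 - gauge C (vscale (1/2) (vadd x y)) | x y.
      x \<in> vec m \<and> y \<in> vec m \<and> gauge C x = 1 \<and> gauge C y = 1 \<and> gauge C (vsub x y) \<ge> \<epsilon>}"

text \<open>Valued in ennreal,
  so that the supremum and the integral are always meaningful.\<close>
definition rademacher ::
  "nat \<Rightarrow> (nat \<Rightarrow> real) measure \<Rightarrow> ((nat \<Rightarrow> real) \<Rightarrow> real) set \<Rightarrow> ennreal" where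
  "rademacher n \<mu> F = (\<integral>\<^sup>+ xs. (\<Sum>\<sigma>\<in>PiE {..<n} (\<lambda>_. {-1, 1::real}).
        (SUP f\<in>F. ennreal \<bar>(1 / real n) * (\<Sum>i<n. f (xs i) * \<sigma> i)\<bar>)) / 2 ^ n
      \<partial>(PiM {..<n} (\<lambda>_. \<mu>)))"

end

theory Submission
  imports Defs
begin

text \<open>Let ||.|| be the gauge of C and ||u||_* = sup {<u, w> | w \<in> C} its dual norm, which is
  dominated by the gauge of the polar, so ||x_i||_* \<le> D.  If the unit vectors x and y norm
  u + v and u - v, then ||u + v||_* + ||u - v||_* = <u, x + y> + <v, x - y>
  \<le> 2 ||u||_* (1 - \<alpha> ||x - y||^p) + ||v||_* ||x - y||, and maximising over ||x - y|| (Young)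
  shows that the dual norm is q-uniformly smooth:
  (||u + v||_*^q + ||u - v||_*^q) / 2 \<le> ||u||_*^q + K ||v||_*^q with K depending only on
  p, q and \<alpha>.  Conditioning on one sign at a time gives
  E ||sum_i \<sigma>_i x_i||_*^q \<le> K sum_i ||x_i||_*^q \<le> K n D^q, and by Jensen the
  Rademacher average is at most (K n)^(1/q) D / n = K^(1/q) D / n^(1/p).\<close>

lemma vscale_in_vec [simp]: "x \<in> vec m \<Longrightarrow> vscale t x \<in> vec m"
  by (simp add: vec_def vscale_def)

lemma vadd_in_vec [simp]: "x \<in> vec m \<Longrightarrow> y \<in> vec m \<Longrightarrow> vadd x y \<in> vec m"
  by (simp add: vec_def vadd_def)

lemma vsub_in_vec [simp]: "x \<in> vec m \<Longrightarrow> y \<in> vec m \<Longrightarrow> vsub x y \<in> vec m"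
  by (simp add: vec_def vsub_def)

lemma vscale_vscale [simp]: "vscale a (vscale b x) = vscale (a * b) x"
  by (simp add: vscale_def fun_eq_iff)

lemma vscale_one [simp]: "vscale 1 x = x"
  by (simp add: vscale_def)

lemma vsub_eq_vadd_neg: "vsub x y = vadd x (vscale (-1) y)"
  by (simp add: fun_eq_iff vsub_def vadd_def vscale_def)

lemma ip_commute: "ip m u w = ip m w u"
  by (simp add: ip_def mult.commute)

lemma ip_vadd_left [simp]: "ip m (vadd u v) w = ip m u w + ip m v w"
  by (simp add: ip_def vadd_def sum.distrib algebra_simps)

lemma ip_vscale_left [simp]: "ip m (vscale t u) w = t * ip m u w"
  by (simp add: ip_def vscale_def sum_distrib_left algebra_simps)

lemma ip_vadd_right [simp]: "ip m u (vadd v w) = ip m u v + ip m u w"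
  by (simp add: ip_def vadd_def sum.distrib algebra_simps)

lemma ip_vsub_right [simp]: "ip m u (vsub v w) = ip m u v - ip m u w"
  by (simp add: ip_def vsub_def sum_subtractf algebra_simps)

lemma ip_vscale_right [simp]: "ip m u (vscale t w) = t * ip m u w"
  by (simp add: ip_def vscale_def sum_distrib_left algebra_simps)

lemma ip_zero_left [simp]: "ip m (\<lambda>_. 0) w = 0"
  by (simp add: ip_def)

lemma ip_zero_right [simp]: "ip m u (\<lambda>_. 0) = 0"
  by (simp add: ip_def)

lemma continuous_on_ip_right: "continuous_on S (ip m u)"
  unfolding ip_def
  by (intro continuous_on_sum continuous_on_mult_left
      continuous_on_subset[OF continuous_on_product_coordinates]) simp_all

lemma continuous_on_vadd_vscale: "continuous_on S (\<lambda>t::real. vadd c (vscale t x))"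
  unfolding vadd_def vscale_def
  by (intro continuous_on_coordinatewise_then_product continuous_intros)

section \<open>The gauge of a symmetric convex body\<close>

lemma eq_if_same_positive_upper_bounds:
  fixes a b :: real
  assumes "0 \<le> a" "0 \<le> b" and "\<And>s. 0 < s \<Longrightarrow> a \<le> s \<longleftrightarrow> b \<le> s"
  shows "a = b"
proof (rule order.antisym; rule dense_ge)
  show "a \<le> s" if "b < s" for s
    using assms(2) assms(3)[of s] that by simp
  show "b \<le> s" if "a < s" for s
    using assms(1) assms(3)[of s] that by simp
qed

locale symmetric_convex_body =
  fixes m :: nat and C :: "(nat \<Rightarrow> real) set"
  assumes subset_vec: "C \<subseteq> vec m" and compact: "compact C" and convex: "vconvex C"
    and symmetric: "centrally_symmetric C"
    and interior_nonempty: "top_of_set (vec m) interior_of C \<noteq> {}"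
begin

lemma neg_mem: "x \<in> C \<Longrightarrow> vscale (-1) x \<in> C"
  using symmetric by (simp add: centrally_symmetric_def)

lemma convex_comb_mem:
  "x \<in> C \<Longrightarrow> y \<in> C \<Longrightarrow> 0 \<le> t \<Longrightarrow> t \<le> 1 \<Longrightarrow> vadd (vscale (1 - t) x) (vscale t y) \<in> C"
  using convex by (simp add: vconvex_def)

lemma midpoint_mem: "x \<in> C \<Longrightarrow> y \<in> C \<Longrightarrow> vscale (1/2) (vadd x y) \<in> C"
  using convex_comb_mem[of x y "1/2"] by (simp add: vadd_def vscale_def add_divide_distrib)

lemma interior_point:
  obtains c where "c \<in> C" "c \<in> top_of_set (vec m) interior_of C"
proof -
  from interior_nonempty obtain c where c: "c \<in> top_of_set (vec m) interior_of C"
    by blast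
  then have "c \<in> C"
    by (meson interior_of_subset subsetD)
  with c that show thesis by blast
qed

lemma zero_mem: "(\<lambda>_. 0) \<in> C"
proof -
  obtain c where "c \<in> C"
    using interior_point by blast
  then have "vscale (1/2) (vadd c (vscale (-1) c)) \<in> C"
    by (intro midpoint_mem neg_mem)
  moreover have "vscale (1/2) (vadd c (vscale (-1) c)) = (\<lambda>_. 0)"
    by (simp add: vadd_def vscale_def)
  ultimately show ?thesis by simp
qed

lemma vscale_mem: "x \<in> C \<Longrightarrow> 0 \<le> t \<Longrightarrow> t \<le> 1 \<Longrightarrow> vscale t x \<in> C"
  using convex_comb_mem[OF zero_mem, of x t] by (simp add: vadd_def vscale_def)

text \<open>Moving a little from an interior point c in direction x stays in C; averaging
  with -c gives a multiple of x.\<close>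
lemma absorbing:
  assumes x: "x \<in> vec m" shows "\<exists>t>0. vscale t x \<in> C"
proof -
  obtain c where c: "c \<in> C" "c \<in> top_of_set (vec m) interior_of C"
    using interior_point by blast
  then obtain U where U: "openin (top_of_set (vec m)) U" "c \<in> U" "U \<subseteq> C"
    by (auto simp: interior_of_def)
  then obtain V where V: "open V" "c \<in> V" "vec m \<inter> V \<subseteq> C"
    by (auto simp: openin_open)
  have "c \<in> vec m"
    using c subset_vec by blast
  let ?f = "\<lambda>t::real. vadd c (vscale t x)"
  have "open (?f -` V)"
    by (intro open_vimage V continuous_on_vadd_vscale)
  moreover have "0 \<in> ?f -` V"
    using V by (simp add: vadd_def vscale_def)
  ultimately obtain e where e: "e > 0" "ball 0 e \<subseteq> ?f -` V"
    by (meson open_contains_ball)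
  have "e/2 \<in> ball 0 e"
    using e by simp
  then have "?f (e/2) \<in> V"
    using e(2) by (meson subsetD vimageE)
  then have "?f (e/2) \<in> C"
    using V(3) \<open>c \<in> vec m\<close> x by auto
  then have "vscale (1/2) (vadd (?f (e/2)) (vscale (-1) c)) \<in> C"
    using midpoint_mem neg_mem[OF c(1)] by blast
  moreover have "vscale (1/2) (vadd (?f (e/2)) (vscale (-1) c)) = vscale (e/4) x"
    by (simp add: vadd_def vscale_def fun_eq_iff)
  ultimately show ?thesis
    using e by (intro exI[of _ "e/4"]) simp
qed

lemma closed_ray: "closed {r::real. vscale r x \<in> C}"
proof -
  have "continuous_on UNIV (\<lambda>r::real. vscale r x)"
    using continuous_on_vadd_vscale[of UNIV "\<lambda>_. 0" x] by (simp add: vadd_def)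
  then show ?thesis
    using compact_imp_closed[OF compact] by (metis closed_vimage vimage_def)
qed

lemma gauge_set_nonempty:
  assumes "x \<in> vec m" shows "\<exists>t\<ge>0. x \<in> vscale t ` C"
proof -
  obtain t where t: "t > 0" "vscale t x \<in> C"
    using absorbing[OF assms] by blast
  then have "x \<in> vscale (1/t) ` C"
    by (intro image_eqI[of _ _ "vscale t x"]) simp_all
  then show ?thesis
    using t by (intro exI[of _ "1/t"]) simp
qed

lemma gauge_nonneg: "x \<in> vec m \<Longrightarrow> 0 \<le> gauge C x"
  unfolding gauge_def using gauge_set_nonempty by (intro cInf_greatest) auto

text \<open>The infimum defining the gauge is attained because C is closed.\<close>
lemma gauge_le_iff:
  assumes x: "x \<in> vec m" and s: "s > 0"
  shows "gauge C x \<le> s \<longleftrightarrow> vscale (1/s) x \<in> C"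
proof
  assume "vscale (1/s) x \<in> C"
  then have "x \<in> vscale s ` C"
    using s by (intro image_eqI[of _ _ "vscale (1/s) x"]) simp_all
  then show "gauge C x \<le> s"
    unfolding gauge_def using s by (intro cInf_lower) (auto intro: bdd_belowI[of _ 0])
next
  assume le: "gauge C x \<le> s"
  have "vscale r x \<in> C" if r: "0 < r" "r < 1/s" for r
  proof -
    have "r * gauge C x \<le> r * s"
      using le r(1) by (simp add: mult_left_mono)
    moreover have "r * s < 1"
      using r s by (simp add: field_simps)
    ultimately have "r * gauge C x < 1"
      by linarith
    then have "gauge C x < 1/r"
      using r(1) by (simp add: field_simps)
    then obtain t c where "0 \<le> t" "t < 1/r" "c \<in> C" "x = vscale t c"
      using gauge_set_nonempty[OF x] unfolding gauge_def by (subst (asm) cInf_less_iff) auto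
    then show ?thesis
      using vscale_mem[of c "r * t"] r by (simp add: field_simps)
  qed
  then have "{0<..<1/s} \<subseteq> {r. vscale r x \<in> C}"
    by auto
  then have "closure {0<..<1/s} \<subseteq> {r. vscale r x \<in> C}"
    using closed_ray closure_minimal by blast
  then show "vscale (1/s) x \<in> C"
    using s by (simp add: closure_greaterThanLessThan subset_iff)
qed

lemma gauge_le_1_iff: "x \<in> vec m \<Longrightarrow> gauge C x \<le> 1 \<longleftrightarrow> x \<in> C"
  using gauge_le_iff[of x 1] by simp

lemma gauge_vscale:
  assumes x: "x \<in> vec m" and t: "t > 0" shows "gauge C (vscale t x) = t * gauge C x"
proof (rule eq_if_same_positive_upper_bounds)
  fix s :: real assume s: "s > 0"
  have "gauge C (vscale t x) \<le> s \<longleftrightarrow> vscale (1/(s/t)) x \<in> C"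
    using gauge_le_iff[of "vscale t x" s] x s by simp
  also have "\<dots> \<longleftrightarrow> t * gauge C x \<le> s"
    using gauge_le_iff[OF x, of "s/t"] s t by (simp add: field_simps)
  finally show "gauge C (vscale t x) \<le> s \<longleftrightarrow> t * gauge C x \<le> s" .
qed (use x t gauge_nonneg in simp_all)

lemma gauge_neg:
  assumes x: "x \<in> vec m" shows "gauge C (vscale (-1) x) = gauge C x"
proof (rule eq_if_same_positive_upper_bounds)
  fix s :: real assume s: "s > 0"
  have "vscale (1/s) (vscale (-1) x) = vscale (-1) (vscale (1/s) x)"
    by simp
  then have "vscale (1/s) (vscale (-1) x) \<in> C \<longleftrightarrow> vscale (1/s) x \<in> C"
    using neg_mem[of "vscale (1/s) x"] neg_mem[of "vscale (1/s) (vscale (-1) x)"] by auto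
  then show "gauge C (vscale (-1) x) \<le> s \<longleftrightarrow> gauge C x \<le> s"
    using gauge_le_iff[OF x s] gauge_le_iff[of "vscale (-1) x" s] x s by simp
qed (use x gauge_nonneg in simp_all)

lemma gauge_vadd_le:
  assumes x: "x \<in> vec m" and y: "y \<in> vec m" shows "gauge C (vadd x y) \<le> gauge C x + gauge C y"
proof (rule dense_ge)
  fix s assume s: "gauge C x + gauge C y < s"
  define \<eta> where "\<eta> = (s - gauge C x - gauge C y) / 2"
  define a where "a = gauge C x + \<eta>"
  define b where "b = gauge C y + \<eta>"
  have "\<eta> > 0"
    using s unfolding \<eta>_def by simp
  then have a: "a > 0" and b: "b > 0"
    using gauge_nonneg[OF x] gauge_nonneg[OF y] unfolding a_def b_def by linarith+
  have ab: "a + b = s"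
    unfolding a_def b_def \<eta>_def by simp
  have "vscale (1/a) x \<in> C" "vscale (1/b) y \<in> C"
    using gauge_le_iff[OF x a] gauge_le_iff[OF y b] s unfolding a_def b_def \<eta>_def by auto
  then have "vadd (vscale (1 - b/s) (vscale (1/a) x)) (vscale (b/s) (vscale (1/b) y)) \<in> C"
    using a b ab by (intro convex_comb_mem) auto
  moreover have "vadd (vscale (1 - b/s) (vscale (1/a) x)) (vscale (b/s) (vscale (1/b) y))
      = vscale (1/s) (vadd x y)"
    using a b ab by (auto simp: fun_eq_iff vscale_def vadd_def field_simps)
  ultimately show "gauge C (vadd x y) \<le> s"
    using gauge_le_iff[of "vadd x y" s] x y a b ab by simp
qed

lemma gauge_vsub_le:
  assumes "x \<in> vec m" and "y \<in> vec m" shows "gauge C (vsub x y) \<le> gauge C x + gauge C y"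
  using gauge_vadd_le[of x "vscale (-1) y"] gauge_neg[of y] assms by (simp add: vsub_eq_vadd_neg)

end

section \<open>The dual norm\<close>

text \<open>The support function of C.  The dual norm of the paper is the gauge of polar m C;
  only the inequality dual_norm_le_polar_gauge between the two is needed.\<close>
definition dual_norm :: "nat \<Rightarrow> (nat \<Rightarrow> real) set \<Rightarrow> (nat \<Rightarrow> real) \<Rightarrow> real" where
  "dual_norm m C u = (SUP w\<in>C. ip m u w)"

context symmetric_convex_body
begin

lemma compact_ip_image: "compact (ip m u ` C)"
  by (intro compact_continuous_image continuous_on_ip_right compact)

lemma ip_le_dual_norm: "w \<in> C \<Longrightarrow> ip m u w \<le> dual_norm m C u"
  unfolding dual_norm_def
  by (intro cSUP_upper bounded_imp_bdd_above compact_imp_bounded compact_ip_image)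

lemma dual_norm_attained: "\<exists>w\<in>C. ip m u w = dual_norm m C u"
proof -
  obtain w where w: "w \<in> C" "\<forall>w'\<in>C. ip m u w' \<le> ip m u w"
    using compact_attains_sup[OF compact_ip_image] zero_mem by blast
  then have "dual_norm m C u \<le> ip m u w"
    unfolding dual_norm_def by (intro cSUP_least) auto
  then show ?thesis
    using w(1) by (intro bexI[of _ w] order.antisym ip_le_dual_norm)
qed

lemma dual_norm_nonneg: "0 \<le> dual_norm m C u"
  using ip_le_dual_norm[OF zero_mem, of u] by simp

lemma dual_norm_zero [simp]: "dual_norm m C (\<lambda>_. 0) = 0"
  using dual_norm_attained[of "\<lambda>_. 0"] by simp

lemma abs_ip_le_dual_norm: "w \<in> C \<Longrightarrow> \<bar>ip m u w\<bar> \<le> dual_norm m C u"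
  using ip_le_dual_norm[of w u] ip_le_dual_norm[OF neg_mem, of w u] by simp

lemma dual_norm_vadd_le: "dual_norm m C (vadd u v) \<le> dual_norm m C u + dual_norm m C v"
  using dual_norm_attained[of "vadd u v"] ip_le_dual_norm[of _ u] ip_le_dual_norm[of _ v]
  by (metis add_mono ip_vadd_left)

lemma dual_norm_neg [simp]: "dual_norm m C (vscale (-1) u) = dual_norm m C u"
proof -
  have le: "dual_norm m C (vscale (-1) v) \<le> dual_norm m C v" for v
  proof -
    obtain w where "w \<in> C" "ip m (vscale (-1) v) w = dual_norm m C (vscale (-1) v)"
      using dual_norm_attained by blast
    then show ?thesis
      using ip_le_dual_norm[OF neg_mem, of w v] by simp
  qed
  show ?thesis
    using le[of u] le[of "vscale (-1) u"] by simp
qed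

lemma dual_norm_vsub_le: "dual_norm m C (vsub u v) \<le> dual_norm m C u + dual_norm m C v"
  using dual_norm_vadd_le[of u "vscale (-1) v"] by (simp add: vsub_eq_vadd_neg)

lemma ip_le_dual_norm_mult_gauge:
  assumes z: "z \<in> vec m" shows "ip m u z \<le> dual_norm m C u * gauge C z"
proof -
  have bound: "ip m u z \<le> dual_norm m C u * s" if "gauge C z < s" for s
  proof -
    have s: "s > 0"
      using that gauge_nonneg[OF z] by linarith
    then have "vscale (1/s) z \<in> C"
      using gauge_le_iff[OF z s] that by simp
    then have "ip m u z / s \<le> dual_norm m C u"
      using ip_le_dual_norm[of "vscale (1/s) z" u] by simp
    then show ?thesis
      using s by (simp add: field_simps)
  qed
  show ?thesis
  proof (cases "dual_norm m C u = 0")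
    case True
    then show ?thesis
      using bound[of "gauge C z + 1"] by simp
  next
    case False
    then have pos: "dual_norm m C u > 0"
      using dual_norm_nonneg[of u] by linarith
    have "ip m u z / dual_norm m C u \<le> gauge C z"
      by (rule dense_ge) (use bound pos in \<open>simp add: field_simps\<close>)
    then show ?thesis
      using pos by (simp add: field_simps)
  qed
qed

lemma exists_unit_maximizer:
  assumes "dual_norm m C u > 0"
  shows "\<exists>x\<in>vec m. gauge C x = 1 \<and> ip m u x = dual_norm m C u"
proof -
  obtain x where x: "x \<in> C" "ip m u x = dual_norm m C u"
    using dual_norm_attained by blast
  then have xm: "x \<in> vec m"
    using subset_vec by blast
  have "gauge C x \<le> 1"
    using gauge_le_1_iff[OF xm] x(1) by simp
  moreover have "gauge C x \<ge> 1"
    using ip_le_dual_norm_mult_gauge[OF xm, of u] x(2) assms by simp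
  ultimately show ?thesis
    using x xm by auto
qed

lemma exists_unit_ip_ge:
  assumes "\<exists>e\<in>vec m. gauge C e = 1"
  shows "\<exists>x\<in>vec m. gauge C x = 1 \<and> dual_norm m C w \<le> ip m w x"
proof (cases "dual_norm m C w > 0")
  case True
  then show ?thesis
    using exists_unit_maximizer by fastforce
next
  case False
  then have w0: "dual_norm m C w = 0"
    using dual_norm_nonneg[of w] by linarith
  obtain e where e: "e \<in> vec m" "gauge C e = 1"
    using assms by blast
  then have "vscale (-1) e \<in> vec m" "gauge C (vscale (-1) e) = 1"
    using gauge_neg by simp_all
  then show ?thesis
    using e w0 by (cases "ip m w e \<ge> 0") force+
qed

lemma dual_norm_le_polar_gauge:
  assumes x: "x \<in> vec m" shows "dual_norm m C x \<le> gauge (polar m C) x"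
  unfolding gauge_def
proof (rule cInf_greatest)
  define t where "t = dual_norm m C x + 1"
  have t: "t > 0"
    unfolding t_def using dual_norm_nonneg[of x] by simp
  have "ip m w (vscale (1/t) x) \<le> 1" if "w \<in> C" for w
    using ip_le_dual_norm[OF that, of x] t
    by (simp add: ip_commute[of m w] t_def field_simps)
  then have "vscale (1/t) x \<in> polar m C"
    using x by (simp add: polar_def)
  then have "x \<in> vscale t ` polar m C"
    using t by (intro image_eqI[of _ _ "vscale (1/t) x"]) simp_all
  then show "{t. 0 \<le> t \<and> x \<in> vscale t ` polar m C} \<noteq> {}"
    using t by (intro ex_in_conv[THEN iffD1] exI[of _ t]) auto
next
  fix t assume "t \<in> {t. 0 \<le> t \<and> x \<in> vscale t ` polar m C}"
  then obtain d where t: "0 \<le> t" and d: "d \<in> polar m C" "x = vscale t d"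
    by auto
  obtain w where w: "w \<in> C" "ip m x w = dual_norm m C x"
    using dual_norm_attained by blast
  have "ip m w d \<le> 1"
    using d(1) w(1) unfolding polar_def by auto
  then have "t * ip m d w \<le> t"
    using t by (simp add: ip_commute mult_left_le)
  then show "dual_norm m C x \<le> t"
    using w(2) d(2) by simp
qed

end

lemma powr_weighted_am_gm:
  fixes a b r :: real
  assumes "0 \<le> a" "0 < b" "0 \<le> r" "r \<le> 1"
  shows "a powr r * b powr (1 - r) \<le> r * a + (1 - r) * b"
  using Youngs_inequality_0[of r "1 - r" a b] assms by (cases "a = 0") auto

lemma powr_midpoint_concave:
  fixes a b r :: real
  assumes "0 \<le> a" "0 \<le> b" "0 \<le> r" "r \<le> 1"
  shows "a powr r + b powr r \<le> 2 * ((a + b) / 2) powr r"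
proof (cases "a + b = 0")
  case True
  then have "a = 0" "b = 0"
    using assms by linarith+
  then show ?thesis
    by simp
next
  case False
  define M where "M = (a + b) / 2"
  have M: "M > 0"
    using False assms unfolding M_def by simp
  have "(a powr r + b powr r) * M powr (1 - r) \<le> (r * a + (1 - r) * M) + (r * b + (1 - r) * M)"
    using powr_weighted_am_gm[of a M r] powr_weighted_am_gm[of b M r] assms M
    unfolding distrib_right by linarith
  also have "\<dots> = 2 * M"
    unfolding M_def by (simp add: algebra_simps)
  also have "\<dots> = 2 * M powr r * M powr (1 - r)"
    using M by (simp flip: powr_add)
  finally show ?thesis
    using M unfolding M_def by simp
qed

lemma powr_add_le_add_powr:
  fixes a b r :: real
  assumes "0 \<le> a" "0 \<le> b" "0 \<le> r" "r \<le> 1"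
  shows "(a + b) powr r \<le> a powr r + b powr r"
proof (cases "a + b = 0")
  case True
  then have "a = 0" "b = 0"
    using assms by linarith+
  then show ?thesis
    by simp
next
  case False
  define S where "S = a + b"
  have S: "S > 0"
    using False assms unfolding S_def by simp
  have "a / S \<le> (a / S) powr r" "b / S \<le> (b / S) powr r"
    using powr_mono'[of r 1 "a/S"] powr_mono'[of r 1 "b/S"] assms S unfolding S_def by auto
  moreover have "a / S + b / S = 1"
    using S unfolding S_def by (simp add: add_divide_distrib[symmetric])
  ultimately have "S powr r * 1 \<le> S powr r * ((a / S) powr r + (b / S) powr r)"
    by (intro mult_left_mono) auto
  also have "\<dots> = a powr r + b powr r"
    using S assms by (simp add: powr_divide distrib_left)
  finally show ?thesis
    unfolding S_def by simp
qed

text \<open>Clarkson's inequality for scalars, from concavity and subadditivity of x \<mapsto> x powr (q/2).\<close>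
lemma clarkson_powr:
  fixes s t q :: real
  assumes "0 \<le> s" "0 \<le> t" "1 \<le> q" "q \<le> 2"
  shows "(s powr q + t powr q) / 2 \<le> ((s + t) / 2) powr q + (\<bar>s - t\<bar> / 2) powr q"
proof -
  define r where "r = q / 2"
  have r: "0 \<le> r" "r \<le> 1"
    using assms unfolding r_def by auto
  have sq: "x powr q = (x\<^sup>2) powr r" if "x \<ge> 0" for x :: real
  proof (cases "x = 0")
    case True
    then show ?thesis
      using assms unfolding r_def by simp
  next
    case False
    then have "x\<^sup>2 = x powr 2"
      using that by (simp add: powr_realpow)
    then show ?thesis
      unfolding r_def by (simp add: powr_powr)
  qed
  have "s powr q + t powr q = (s\<^sup>2) powr r + (t\<^sup>2) powr r"
    using sq assms by simp
  also have "\<dots> \<le> 2 * ((s\<^sup>2 + t\<^sup>2) / 2) powr r"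
    using r by (intro powr_midpoint_concave) auto
  also have "(s\<^sup>2 + t\<^sup>2) / 2 = ((s + t) / 2)\<^sup>2 + (\<bar>s - t\<bar> / 2)\<^sup>2"
    by (simp add: power2_eq_square field_simps)
  also have "(((s + t) / 2)\<^sup>2 + (\<bar>s - t\<bar> / 2)\<^sup>2) powr r
      \<le> (((s + t) / 2)\<^sup>2) powr r + ((\<bar>s - t\<bar> / 2)\<^sup>2) powr r"
    using r by (intro powr_add_le_add_powr) auto
  also have "\<dots> = ((s + t) / 2) powr q + (\<bar>s - t\<bar> / 2) powr q"
    using sq assms by simp
  finally show ?thesis
    by simp
qed

text \<open>The Fenchel conjugate of \<epsilon> \<mapsto> 2 a \<alpha> \<epsilon>^p, via Young's inequality.\<close>
lemma linear_minus_powr_le: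
  fixes p q \<alpha> a b \<epsilon> :: real
  assumes pq: "p > 1" "q > 1" "1/p + 1/q = 1" and "\<alpha> > 0" "a > 0" "b \<ge> 0" "\<epsilon> \<ge> 0"
  shows "b * \<epsilon> - 2 * a * \<alpha> * \<epsilon> powr p \<le> b powr q * a powr (1 - q) / (q * (2 * \<alpha> * p) powr (q - 1))"
proof -
  define L where "L = (2 * a * \<alpha> * p) powr (1/p)"
  have Z: "2 * a * \<alpha> * p > 0"
    using assms by simp
  then have L: "L > 0" and Lp: "L powr p = 2 * a * \<alpha> * p"
    unfolding L_def using assms by (simp_all add: powr_powr)
  have "q / p = q - 1"
    using pq by (simp add: field_simps)
  then have "L powr q = (2 * \<alpha> * p * a) powr (q - 1)"
    using Z unfolding L_def by (simp add: powr_powr mult_ac)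
  also have "\<dots> = (2 * \<alpha> * p) powr (q - 1) / a powr (1 - q)"
    using assms by (simp add: powr_mult powr_diff)
  finally have Lq: "L powr q = (2 * \<alpha> * p) powr (q - 1) / a powr (1 - q)" .
  have "b * \<epsilon> = (L * \<epsilon>) * (b / L)"
    using L by simp
  also have "\<dots> \<le> (L * \<epsilon>) powr p / p + (b / L) powr q / q"
    using assms L by (intro Youngs_inequality) auto
  also have "\<dots> = 2 * a * \<alpha> * \<epsilon> powr p + b powr q * a powr (1 - q) / (q * (2 * \<alpha> * p) powr (q - 1))"
    using assms L by (simp add: powr_mult powr_divide Lp Lq)
  finally show ?thesis
    by simp
qed

lemma powr_le_four_mult:
  fixes s b q :: real
  assumes "0 \<le> s" "s \<le> 2 * b" "0 \<le> q" "q \<le> 2"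
  shows "s powr q \<le> 4 * b powr q"
proof -
  have "s powr q \<le> (2 * b) powr q"
    using assms by (intro powr_mono2) auto
  also have "\<dots> = 2 powr q * b powr q"
    using assms by (simp add: powr_mult)
  also have "\<dots> \<le> 2 powr 2 * b powr q"
    using assms by (intro mult_right_mono powr_mono) auto
  finally show ?thesis
    by (simp add: powr_numeral)
qed

definition smoothness_constant :: "real \<Rightarrow> real" where
  "smoothness_constant c = max 4 ((2 + c) * c + 1)"

lemma one_plus_powr_le:
  fixes x c q :: real
  assumes "0 \<le> x" "x \<le> c" "q \<le> 2"
  shows "(1 + x) powr q \<le> 1 + (2 + c) * x"
proof -
  have "(1 + x) powr q \<le> (1 + x) powr 2"
    using assms by (intro powr_mono) auto
  also have "\<dots> = 1 + 2 * x + x * x"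
    using assms by (simp add: powr_realpow power2_eq_square algebra_simps)
  also have "\<dots> \<le> 1 + (2 + c) * x"
    using mult_right_mono[OF assms(2,1)] by (simp add: algebra_simps)
  finally show ?thesis .
qed

lemma midpoint_powr_le:
  fixes q a b c M :: real
  assumes q: "1 < q" "q \<le> 2" and a: "0 < a" and b: "0 \<le> b" "b < a" and c: "0 \<le> c"
    and M: "0 \<le> M" "M \<le> a + c * b powr q * a powr (1 - q)"
  shows "M powr q \<le> a powr q + (2 + c) * c * b powr q"
proof -
  define x where "x = c * (b / a) powr q"
  have "(b / a) powr q \<le> 1"
    using a b q by (intro powr_le1) auto
  then have x: "0 \<le> x" "x \<le> c"
    using c unfolding x_def by (auto simp: mult_left_le)
  have bq: "b powr q = a powr q * (b / a) powr q"
    using a b by (simp add: powr_divide)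
  have "b powr q * a powr (1 - q) = (b / a) powr q * (a powr q * a powr (1 - q))"
    using bq by simp
  also have "\<dots> = a * (b / a) powr q"
    using a by (simp flip: powr_add)
  finally have "M \<le> a * (1 + x)"
    using M(2) unfolding x_def by (simp add: algebra_simps)
  then have "M powr q \<le> (a * (1 + x)) powr q"
    using M(1) q by (intro powr_mono2) auto
  also have "\<dots> = a powr q * (1 + x) powr q"
    using a x by (intro powr_mult)
  also have "\<dots> \<le> a powr q * (1 + (2 + c) * x)"
    using one_plus_powr_le[OF x q(2)] by (intro mult_left_mono) auto
  also have "\<dots> = a powr q + (2 + c) * c * b powr q"
    unfolding x_def bq by (simp add: algebra_simps)
  finally show ?thesis .
qed

text \<open>If a \<le> b everything is of order b; otherwise the midpoint (s + t)/2 exceeds a only by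
  a c (b/a)^q fraction, and Clarkson's inequality controls the spread |s - t| \<le> 2 b.\<close>
lemma mean_powr_le_of_sum_le:
  fixes q a b s t c :: real
  assumes q: "1 < q" "q \<le> 2" and nonneg: "0 \<le> a" "0 \<le> b" "0 \<le> s" "0 \<le> t" "0 \<le> c"
    and le: "s \<le> a + b" "t \<le> a + b" "\<bar>s - t\<bar> \<le> 2 * b"
    and sum_le: "a > 0 \<Longrightarrow> s + t \<le> 2 * a + 2 * c * b powr q * a powr (1 - q)"
  shows "(s powr q + t powr q) / 2 \<le> a powr q + smoothness_constant c * b powr q"
proof (cases "a \<le> b")
  case True
  then have "s powr q \<le> 4 * b powr q" "t powr q \<le> 4 * b powr q"
    using le nonneg q by (intro powr_le_four_mult; linarith)+
  then have "(s powr q + t powr q) / 2 \<le> 4 * b powr q"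
    by simp
  also have "\<dots> \<le> smoothness_constant c * b powr q"
    unfolding smoothness_constant_def by (intro mult_right_mono) auto
  also have "\<dots> \<le> a powr q + smoothness_constant c * b powr q"
    by simp
  finally show ?thesis .
next
  case False
  then have a: "a > 0" and ba: "b < a"
    using nonneg by auto
  have mid: "((s + t) / 2) powr q \<le> a powr q + (2 + c) * c * b powr q"
    using sum_le[OF a] nonneg by (intro midpoint_powr_le[OF q a _ ba]) auto
  have spread: "(\<bar>s - t\<bar> / 2) powr q \<le> b powr q"
    using le q by (intro powr_mono2) auto
  have "(s powr q + t powr q) / 2 \<le> ((s + t) / 2) powr q + (\<bar>s - t\<bar> / 2) powr q"
    using nonneg q by (intro clarkson_powr) auto
  also have "\<dots> \<le> a powr q + ((2 + c) * c + 1) * b powr q"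
    using mid spread by (simp add: algebra_simps)
  also have "\<dots> \<le> a powr q + smoothness_constant c * b powr q"
    unfolding smoothness_constant_def by (intro add_left_mono mult_right_mono) auto
  finally show ?thesis .
qed

section \<open>Uniform smoothness of the dual norm\<close>

definition uniformly_convex :: "nat \<Rightarrow> (nat \<Rightarrow> real) set \<Rightarrow> real \<Rightarrow> real \<Rightarrow> bool" where
  "uniformly_convex m C \<alpha> p \<longleftrightarrow>
     (\<forall>\<epsilon>. 0 \<le> \<epsilon> \<and> \<epsilon> \<le> 2 \<longrightarrow> modulus_convexity m C \<epsilon> \<ge> \<alpha> * \<epsilon> powr p)"

context symmetric_convex_body
begin

lemma gauge_midpoint:
  "x \<in> vec m \<Longrightarrow> y \<in> vec m \<Longrightarrow> gauge C (vscale (1/2) (vadd x y)) = gauge C (vadd x y) / 2"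
  using gauge_vscale[of "vadd x y" "1/2"] by simp

lemma modulus_convexity_le:
  assumes x: "x \<in> vec m" "gauge C x = 1" and y: "y \<in> vec m" "gauge C y = 1"
  shows "modulus_convexity m C (gauge C (vsub x y)) \<le> 1 - gauge C (vscale (1/2) (vadd x y))"
  unfolding modulus_convexity_def
proof (rule cInf_lower)
  show "1 - gauge C (vscale (1/2) (vadd x y)) \<in> {1 - gauge C (vscale (1/2) (vadd x' y')) | x' y'.
      x' \<in> vec m \<and> y' \<in> vec m \<and> gauge C x' = 1 \<and> gauge C y' = 1
      \<and> gauge C (vsub x' y') \<ge> gauge C (vsub x y)}"
    using x y by blast
  have "gauge C (vscale (1/2) (vadd x' y')) \<le> 1"
    if "x' \<in> vec m" "y' \<in> vec m" "gauge C x' = 1" "gauge C y' = 1" for x' y'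
    using that gauge_midpoint[OF that(1,2)] gauge_vadd_le[OF that(1,2)] by simp
  then show "bdd_below {1 - gauge C (vscale (1/2) (vadd x' y')) | x' y'.
      x' \<in> vec m \<and> y' \<in> vec m \<and> gauge C x' = 1 \<and> gauge C y' = 1
      \<and> gauge C (vsub x' y') \<ge> gauge C (vsub x y)}"
    by (intro bdd_belowI[of _ 0]) force
qed

lemma dual_norm_vadd_vsub_le:
  fixes p q \<alpha> :: real
  assumes pq: "p > 1" "q > 1" "1/p + 1/q = 1" and \<alpha>: "\<alpha> > 0"
    and uc: "uniformly_convex m C \<alpha> p" and pos: "dual_norm m C u > 0"
  shows "dual_norm m C (vadd u v) + dual_norm m C (vsub u v) \<le> 2 * dual_norm m C u
    + dual_norm m C v powr q * dual_norm m C u powr (1 - q) / (q * (2 * \<alpha> * p) powr (q - 1))"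
proof -
  have unit: "\<exists>e\<in>vec m. gauge C e = 1"
    using exists_unit_maximizer[OF pos] by blast
  obtain x where x: "x \<in> vec m" "gauge C x = 1" "dual_norm m C (vadd u v) \<le> ip m (vadd u v) x"
    using exists_unit_ip_ge[OF unit] by blast
  obtain y where y: "y \<in> vec m" "gauge C y = 1" "dual_norm m C (vsub u v) \<le> ip m (vsub u v) y"
    using exists_unit_ip_ge[OF unit] by blast
  define \<epsilon> where "\<epsilon> = gauge C (vsub x y)"
  have \<epsilon>: "0 \<le> \<epsilon>" "\<epsilon> \<le> 2"
    using gauge_nonneg[of "vsub x y"] gauge_vsub_le[of x y] x y unfolding \<epsilon>_def by auto
  have "\<alpha> * \<epsilon> powr p \<le> 1 - gauge C (vadd x y) / 2"
    using uc \<epsilon> modulus_convexity_le[OF x(1,2) y(1,2)] gauge_midpoint[OF x(1) y(1)]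
    unfolding uniformly_convex_def \<epsilon>_def by force
  then have mid: "gauge C (vadd x y) \<le> 2 * (1 - \<alpha> * \<epsilon> powr p)"
    by simp
  have "dual_norm m C (vadd u v) + dual_norm m C (vsub u v) \<le> ip m u (vadd x y) + ip m v (vsub x y)"
    using x(3) y(3) by (simp add: ip_commute[of m _ x] ip_commute[of m _ y])
  also have "\<dots> \<le> dual_norm m C u * gauge C (vadd x y) + dual_norm m C v * \<epsilon>"
    using x(1) y(1) unfolding \<epsilon>_def by (intro add_mono ip_le_dual_norm_mult_gauge) simp_all
  also have "\<dots> \<le> dual_norm m C u * (2 * (1 - \<alpha> * \<epsilon> powr p)) + dual_norm m C v * \<epsilon>"
    using mid pos by simp
  also have "\<dots> = 2 * dual_norm m C u
      + (dual_norm m C v * \<epsilon> - 2 * dual_norm m C u * \<alpha> * \<epsilon> powr p)"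
    by (simp add: algebra_simps)
  also have "\<dots> \<le> 2 * dual_norm m C u
      + dual_norm m C v powr q * dual_norm m C u powr (1 - q) / (q * (2 * \<alpha> * p) powr (q - 1))"
    using pq \<alpha> pos dual_norm_nonneg \<epsilon> by (intro add_left_mono linear_minus_powr_le) auto
  finally show ?thesis .
qed

lemma dual_norm_q_smooth:
  fixes p q \<alpha> :: real
  assumes pq: "p > 1" "1 < q" "q \<le> 2" "1/p + 1/q = 1" and \<alpha>: "\<alpha> > 0"
    and uc: "uniformly_convex m C \<alpha> p"
  shows "(dual_norm m C (vadd u v) powr q + dual_norm m C (vsub u v) powr q) / 2
    \<le> dual_norm m C u powr q
       + smoothness_constant (1 / (2 * q * (2 * \<alpha> * p) powr (q - 1))) * dual_norm m C v powr q"
proof (rule mean_powr_le_of_sum_le)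
  have "vadd u v = vadd (vsub u v) (vadd v v)" "vsub u v = vsub (vadd u v) (vadd v v)"
    by (simp_all add: fun_eq_iff vadd_def vsub_def)
  then have "dual_norm m C (vadd u v) \<le> dual_norm m C (vsub u v) + 2 * dual_norm m C v"
    "dual_norm m C (vsub u v) \<le> dual_norm m C (vadd u v) + 2 * dual_norm m C v"
    using dual_norm_vadd_le[of "vsub u v" "vadd v v"] dual_norm_vsub_le[of "vadd u v" "vadd v v"]
      dual_norm_vadd_le[of v v] by auto
  then show "\<bar>dual_norm m C (vadd u v) - dual_norm m C (vsub u v)\<bar> \<le> 2 * dual_norm m C v"
    by linarith
  show "dual_norm m C (vadd u v) + dual_norm m C (vsub u v)
      \<le> 2 * dual_norm m C u + 2 * (1 / (2 * q * (2 * \<alpha> * p) powr (q - 1)))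
        * dual_norm m C v powr q * dual_norm m C u powr (1 - q)"
    if "dual_norm m C u > 0"
    using dual_norm_vadd_vsub_le[OF pq(1,2,4) \<alpha> uc that] by simp
qed (use pq dual_norm_nonneg dual_norm_vadd_le dual_norm_vsub_le in auto)

end

section \<open>Rademacher averages\<close>

lemma sum_PiE_lessThan_Suc:
  "(\<Sum>\<sigma>\<in>PiE {..<Suc n} (\<lambda>_. T). f \<sigma>) = (\<Sum>\<sigma>\<in>PiE {..<n} (\<lambda>_. T). \<Sum>y\<in>T. f (\<sigma>(n := y)))"
proof -
  have "PiE {..<Suc n} (\<lambda>_. T) = (\<lambda>(y, g). g(n := y)) ` (T \<times> PiE {..<n} (\<lambda>_. T))"
    using PiE_insert_eq[of n "{..<n}" "\<lambda>_. T"] by (simp add: lessThan_Suc)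
  moreover have "inj_on (\<lambda>(y, g). g(n := y)) (T \<times> PiE {..<n} (\<lambda>_. T))"
    using inj_combinator[of n "{..<n}" "\<lambda>_. T"] by simp
  ultimately have "(\<Sum>\<sigma>\<in>PiE {..<Suc n} (\<lambda>_. T). f \<sigma>) = (\<Sum>(y, g)\<in>T \<times> PiE {..<n} (\<lambda>_. T). f (g(n := y)))"
    by (simp add: sum.reindex case_prod_unfold)
  also have "\<dots> = (\<Sum>y\<in>T. \<Sum>g\<in>PiE {..<n} (\<lambda>_. T). f (g(n := y)))"
    by (rule sum.cartesian_product[symmetric])
  finally show ?thesis
    by (simp add: sum.swap[of _ T])
qed

lemma card_sign_vectors: "card (PiE {..<n} (\<lambda>_. {-1, 1::real})) = 2 ^ n"
  by (simp add: card_PiE numeral_2_eq_2)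

lemma sum_sign_vectors_le:
  fixes F :: "(nat \<Rightarrow> real) \<Rightarrow> real" and xs :: "nat \<Rightarrow> nat \<Rightarrow> real"
  assumes smooth: "\<And>u v. F (vadd u v) + F (vsub u v) \<le> 2 * F u + 2 * K * F v"
  shows "(\<Sum>\<sigma>\<in>PiE {..<n} (\<lambda>_. {-1, 1::real}). F (\<lambda>j. \<Sum>i<n. \<sigma> i * xs i j))
     \<le> 2 ^ n * (F (\<lambda>_. 0) + K * (\<Sum>i<n. F (xs i)))"
proof (induction n)
  case 0
  then show ?case
    by simp
next
  case (Suc n)
  let ?P = "PiE {..<n} (\<lambda>_. {-1, 1::real})"
  let ?u = "\<lambda>\<sigma> j. \<Sum>i<n. \<sigma> i * xs i j"
  have step: "(\<Sum>y\<in>{-1, 1::real}. F (\<lambda>j. \<Sum>i<Suc n. (\<sigma>(n := y)) i * xs i j))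
      \<le> 2 * F (?u \<sigma>) + 2 * K * F (xs n)" for \<sigma>
  proof -
    have "(\<lambda>j. \<Sum>i<Suc n. (\<sigma>(n := y)) i * xs i j) = (\<lambda>j. ?u \<sigma> j + y * xs n j)" for y
      by (simp add: fun_eq_iff)
    then show ?thesis
      using smooth[of "?u \<sigma>" "xs n"] by (simp add: vadd_def vsub_def add.commute)
  qed
  have "(\<Sum>\<sigma>\<in>PiE {..<Suc n} (\<lambda>_. {-1, 1::real}). F (\<lambda>j. \<Sum>i<Suc n. \<sigma> i * xs i j))
      \<le> (\<Sum>\<sigma>\<in>?P. 2 * F (?u \<sigma>) + 2 * K * F (xs n))"
    unfolding sum_PiE_lessThan_Suc by (intro sum_mono step)
  also have "\<dots> = 2 * (\<Sum>\<sigma>\<in>?P. F (?u \<sigma>)) + 2 ^ n * (2 * K * F (xs n))"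
    by (simp add: sum.distrib sum_distrib_left card_sign_vectors)
  also have "\<dots> \<le> 2 ^ Suc n * (F (\<lambda>_. 0) + K * (\<Sum>i<Suc n. F (xs i)))"
    using Suc.IH by (simp add: algebra_simps)
  finally show ?case .
qed

lemma power_mean_le:
  fixes f :: "'a \<Rightarrow> real"
  assumes q: "q > 1" and A: "finite A" "A \<noteq> {}" and f: "\<And>i. i \<in> A \<Longrightarrow> 0 \<le> f i"
  shows "(\<Sum>i\<in>A. f i) / card A \<le> ((\<Sum>i\<in>A. f i powr q) / card A) powr (1/q)"
proof -
  define N where "N = real (card A)"
  define B where "B = ((\<Sum>i\<in>A. f i powr q) / N) powr (1/q)"
  have N: "N > 0"
    using A unfolding N_def by (simp add: card_gt_0_iff)
  have "0 \<le> (\<Sum>i\<in>A. f i powr q)"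
    by (simp add: sum_nonneg)
  then have Bq: "B powr q = (\<Sum>i\<in>A. f i powr q) / N"
    unfolding B_def using q N by (simp add: powr_powr)
  show ?thesis
  proof (cases "B = 0")
    case True
    then have "\<forall>i\<in>A. f i powr q = 0"
      using Bq N A(1) q by (simp add: sum_nonneg_eq_0_iff)
    then show ?thesis
      by simp
  next
    case False
    then have B: "B > 0"
      unfolding B_def by simp
    define p where "p = q / (q - 1)"
    have pq: "p > 1" "1/p + 1/q = 1"
      using q unfolding p_def by (simp_all add: field_simps)
    have "f i / B \<le> f i powr q / (B powr q * q) + 1 / p" if "i \<in> A" for i
      using Youngs_inequality[of p q 1 "f i / B"] pq q f[OF that] B by (simp add: powr_divide)
    then have "(\<Sum>i\<in>A. f i / B) \<le> (\<Sum>i\<in>A. f i powr q / (B powr q * q) + 1 / p)"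
      by (intro sum_mono)
    also have "\<dots> = (\<Sum>i\<in>A. f i powr q) / (B powr q * q) + N / p"
      by (simp add: sum.distrib sum_divide_distrib N_def)
    also have "(\<Sum>i\<in>A. f i powr q) = B powr q * N"
      using Bq N by simp
    also have "B powr q * N / (B powr q * q) + N / p = N * (1/p + 1/q)"
      using B by (simp add: algebra_simps)
    also have "\<dots> = N"
      using pq by simp
    finally have "(\<Sum>i\<in>A. f i) \<le> N * B"
      using B by (simp add: divide_le_eq mult.commute flip: sum_divide_distrib)
    then show ?thesis
      using N unfolding B_def N_def by (simp add: divide_le_eq mult.commute)
  qed
qed

lemma sum_ip_mult_sign: "(\<Sum>i<n. ip m (xs i) w * \<sigma> i) = ip m (\<lambda>j. \<Sum>i<n. \<sigma> i * xs i j) w"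
  unfolding ip_def
  by (simp add: sum_distrib_left sum_distrib_right mult_ac sum.swap[of _ "{..<n}" "{..<m}"])

lemma rademacher_le_of_pointwise:
  assumes \<mu>: "prob_space \<mu>" and X: "AE x in \<mu>. x \<in> X"
    and bound: "\<And>xs. \<forall>i<n. xs i \<in> X \<Longrightarrow> (\<Sum>\<sigma>\<in>PiE {..<n} (\<lambda>_. {-1, 1::real}).
      (SUP f\<in>F. ennreal \<bar>(1 / real n) * (\<Sum>i<n. f (xs i) * \<sigma> i)\<bar>)) / 2 ^ n \<le> B"
  shows "rademacher n \<mu> F \<le> B"
proof -
  have "AE xs in PiM {..<n} (\<lambda>_. \<mu>). \<forall>i\<in>{..<n}. xs i \<in> X"
    using AE_PiM_component[of "{..<n}" "\<lambda>_. \<mu>" _ "\<lambda>x. x \<in> X"] \<mu> X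
    by (intro eventually_ball_finite) auto
  then have "AE xs in PiM {..<n} (\<lambda>_. \<mu>). (\<Sum>\<sigma>\<in>PiE {..<n} (\<lambda>_. {-1, 1::real}).
      (SUP f\<in>F. ennreal \<bar>(1 / real n) * (\<Sum>i<n. f (xs i) * \<sigma> i)\<bar>)) / 2 ^ n \<le> B"
    by eventually_elim (rule bound, auto)
  then have "rademacher n \<mu> F \<le> (\<integral>\<^sup>+ xs. B \<partial>PiM {..<n} (\<lambda>_. \<mu>))"
    unfolding rademacher_def by (rule nn_integral_mono_AE)
  also have "\<dots> = B"
    using prob_space_PiM[of "{..<n}" "\<lambda>_. \<mu>"] \<mu> by (simp add: prob_space.emeasure_space_1)
  finally show ?thesis .
qed

context symmetric_convex_body
begin

lemma SUP_linear_class_le_dual_norm: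
  assumes "n > 0"
  shows "(SUP f\<in>(\<lambda>w x. ip m x w) ` {w \<in> vec m. gauge C w \<le> 1}.
      ennreal \<bar>(1 / real n) * (\<Sum>i<n. f (xs i) * \<sigma> i)\<bar>)
    \<le> ennreal (dual_norm m C (\<lambda>j. \<Sum>i<n. \<sigma> i * xs i j) / real n)"
proof (intro SUP_least ennreal_leI)
  fix f assume "f \<in> (\<lambda>w x. ip m x w) ` {w \<in> vec m. gauge C w \<le> 1}"
  then obtain w where w: "w \<in> C" "f = (\<lambda>x. ip m x w)"
    using gauge_le_1_iff by auto
  then have "\<bar>(1 / real n) * (\<Sum>i<n. f (xs i) * \<sigma> i)\<bar> = \<bar>ip m (\<lambda>j. \<Sum>i<n. \<sigma> i * xs i j) w\<bar> / real n"
    by (simp add: sum_ip_mult_sign abs_mult)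
  also have "\<dots> \<le> dual_norm m C (\<lambda>j. \<Sum>i<n. \<sigma> i * xs i j) / real n"
    using abs_ip_le_dual_norm[OF w(1)] by (simp add: divide_right_mono)
  finally show "\<bar>(1 / real n) * (\<Sum>i<n. f (xs i) * \<sigma> i)\<bar>
      \<le> dual_norm m C (\<lambda>j. \<Sum>i<n. \<sigma> i * xs i j) / real n" .
qed

lemma sign_average_dual_norm_le:
  fixes p q \<alpha> D :: real
  assumes pq: "p > 1" "1 < q" "q \<le> 2" "1/p + 1/q = 1" and \<alpha>: "\<alpha> > 0"
    and uc: "uniformly_convex m C \<alpha> p"
    and D: "0 \<le> D" "\<And>i. i < n \<Longrightarrow> dual_norm m C (xs i) \<le> D"
  defines "K \<equiv> smoothness_constant (1 / (2 * q * (2 * \<alpha> * p) powr (q - 1)))"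
  shows "(\<Sum>\<sigma>\<in>PiE {..<n} (\<lambda>_. {-1, 1::real}). dual_norm m C (\<lambda>j. \<Sum>i<n. \<sigma> i * xs i j)) / 2 ^ n
    \<le> (K * real n) powr (1/q) * D"
proof -
  let ?P = "PiE {..<n} (\<lambda>_. {-1, 1::real})"
  let ?N = "\<lambda>\<sigma>. dual_norm m C (\<lambda>j. \<Sum>i<n. \<sigma> i * xs i j)"
  have K: "K > 0"
    unfolding K_def smoothness_constant_def by simp
  have "(\<Sum>\<sigma>\<in>?P. ?N \<sigma> powr q) \<le> 2 ^ n * (dual_norm m C (\<lambda>_. 0) powr q
      + K * (\<Sum>i<n. dual_norm m C (xs i) powr q))"
    using dual_norm_q_smooth[OF pq \<alpha> uc] unfolding K_def
    by (intro sum_sign_vectors_le[where F = "\<lambda>u. dual_norm m C u powr q"]) (simp add: field_simps)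
  also have "\<dots> \<le> 2 ^ n * (K * (real n * D powr q))"
  proof -
    have "(\<Sum>i<n. dual_norm m C (xs i) powr q) \<le> (\<Sum>i<n. D powr q)"
      using D pq dual_norm_nonneg by (intro sum_mono powr_mono2) auto
    then show ?thesis
      using K by simp
  qed
  finally have mean_q: "(\<Sum>\<sigma>\<in>?P. ?N \<sigma> powr q) / card ?P \<le> K * real n * D powr q"
    by (simp add: card_sign_vectors divide_le_eq mult_ac)
  have "(\<Sum>\<sigma>\<in>?P. ?N \<sigma>) / card ?P \<le> ((\<Sum>\<sigma>\<in>?P. ?N \<sigma> powr q) / card ?P) powr (1/q)"
    using pq dual_norm_nonneg by (intro power_mean_le) (auto simp: PiE_eq_empty_iff finite_PiE)
  also have "\<dots> \<le> (K * real n * D powr q) powr (1/q)"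
    using mean_q pq by (intro powr_mono2) (simp_all add: sum_nonneg)
  also have "\<dots> = (K * real n) powr (1/q) * D"
    using K D pq by (simp add: powr_mult powr_powr)
  finally show ?thesis
    by (simp add: card_sign_vectors)
qed

lemma rademacher_sum_le:
  fixes p q \<alpha> D :: real
  assumes pq: "p > 1" "1 < q" "q \<le> 2" "1/p + 1/q = 1" and \<alpha>: "\<alpha> > 0"
    and uc: "uniformly_convex m C \<alpha> p"
    and n: "n \<ge> 1" and D: "\<And>i. i < n \<Longrightarrow> dual_norm m C (xs i) \<le> D"
  defines "K \<equiv> smoothness_constant (1 / (2 * q * (2 * \<alpha> * p) powr (q - 1)))"
  shows "(\<Sum>\<sigma>\<in>PiE {..<n} (\<lambda>_. {-1, 1::real}). (SUP f\<in>(\<lambda>w x. ip m x w) ` {w \<in> vec m. gauge C w \<le> 1}.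
      ennreal \<bar>(1 / real n) * (\<Sum>i<n. f (xs i) * \<sigma> i)\<bar>)) / 2 ^ n
    \<le> ennreal (K powr (1 / q) * D / real n powr (1 / p))"
proof -
  let ?P = "PiE {..<n} (\<lambda>_. {-1, 1::real})"
  let ?N = "\<lambda>\<sigma>. dual_norm m C (\<lambda>j. \<Sum>i<n. \<sigma> i * xs i j)"
  have D0: "0 \<le> D"
    using D[of 0] n dual_norm_nonneg[of "xs 0"] by simp
  have "(\<Sum>\<sigma>\<in>?P. (SUP f\<in>(\<lambda>w x. ip m x w) ` {w \<in> vec m. gauge C w \<le> 1}.
      ennreal \<bar>(1 / real n) * (\<Sum>i<n. f (xs i) * \<sigma> i)\<bar>)) \<le> (\<Sum>\<sigma>\<in>?P. ennreal (?N \<sigma> / real n))"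
    using n by (intro sum_mono SUP_linear_class_le_dual_norm) simp
  also have "\<dots> = ennreal ((\<Sum>\<sigma>\<in>?P. ?N \<sigma>) / real n)"
    using dual_norm_nonneg by (simp add: sum_divide_distrib sum_ennreal)
  finally have "(\<Sum>\<sigma>\<in>?P. (SUP f\<in>(\<lambda>w x. ip m x w) ` {w \<in> vec m. gauge C w \<le> 1}.
      ennreal \<bar>(1 / real n) * (\<Sum>i<n. f (xs i) * \<sigma> i)\<bar>)) / 2 ^ n
      \<le> ennreal ((\<Sum>\<sigma>\<in>?P. ?N \<sigma>) / real n) / 2 ^ n"
    by (rule divide_right_mono_ennreal)
  also have "\<dots> = ennreal ((\<Sum>\<sigma>\<in>?P. ?N \<sigma>) / 2 ^ n / real n)"
    using dual_norm_nonneg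
    by (simp add: ennreal_power divide_ennreal sum_nonneg field_simps flip: ennreal_numeral)
  also have "\<dots> \<le> ennreal ((K * real n) powr (1/q) * D / real n)"
    using sign_average_dual_norm_le[OF pq \<alpha> uc D0 D] unfolding K_def
    by (intro ennreal_leI divide_right_mono) auto
  also have "(K * real n) powr (1/q) * D / real n = K powr (1 / q) * D / real n powr (1 / p)"
    using n pq by (simp add: powr_mult field_simps flip: powr_add)
  finally show ?thesis .
qed

lemma rademacher_linear_class_le:
  fixes p q \<alpha> D :: real
  assumes pq: "p > 1" "1 < q" "q \<le> 2" "1/p + 1/q = 1" and \<alpha>: "\<alpha> > 0"
    and uc: "uniformly_convex m C \<alpha> p"
    and X: "X \<subseteq> vec m" "bdd_above (gauge (polar m C) ` X)"
    and D: "D = (SUP x\<in>X. gauge (polar m C) x)"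
    and n: "n \<ge> 1" and \<mu>: "prob_space \<mu>" "AE x in \<mu>. x \<in> X"
  defines "K \<equiv> smoothness_constant (1 / (2 * q * (2 * \<alpha> * p) powr (q - 1)))"
  shows "rademacher n \<mu> ((\<lambda>w x. ip m x w) ` {w \<in> vec m. gauge C w \<le> 1})
    \<le> ennreal (K powr (1 / q) * D / real n powr (1 / p))"
proof (rule rademacher_le_of_pointwise[OF \<mu>])
  have "dual_norm m C x \<le> D" if "x \<in> X" for x
    using dual_norm_le_polar_gauge[of x] cSUP_upper[OF that X(2)] that X(1) D by force
  then show "(\<Sum>\<sigma>\<in>PiE {..<n} (\<lambda>_. {-1, 1::real}). (SUP f\<in>(\<lambda>w x. ip m x w) ` {w \<in> vec m. gauge C w \<le> 1}.
      ennreal \<bar>(1 / real n) * (\<Sum>i<n. f (xs i) * \<sigma> i)\<bar>)) / 2 ^ n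
    \<le> ennreal (K powr (1 / q) * D / real n powr (1 / p))" if "\<forall>i<n. xs i \<in> X" for xs
    using that unfolding K_def by (intro rademacher_sum_le[OF pq \<alpha> uc n]) auto
qed

end

theorem mainTheorem4:
  fixes p q \<alpha> :: real
  assumes "p \<ge> 2" and "1 < q" and "q \<le> 2" and "1 / p + 1 / q = 1" and "\<alpha> > 0"
  shows "\<exists>K > 0. \<forall>(m::nat) (C :: (nat \<Rightarrow> real) set) (X :: (nat \<Rightarrow> real) set) (D::real)
           (n::nat) (\<mu> :: (nat \<Rightarrow> real) measure).
      C \<subseteq> vec m \<and> compact C \<and> vconvex C \<and> centrally_symmetric C
      \<and> (top_of_set (vec m)) interior_of C \<noteq> {}
      \<and> (\<forall>\<epsilon>. 0 \<le> \<epsilon> \<and> \<epsilon> \<le> 2 \<longrightarrow> modulus_convexity m C \<epsilon> \<ge> \<alpha> * \<epsilon> powr p)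
      \<and> X \<subseteq> vec m \<and> bdd_above (gauge (polar m C) ` X) \<and> D = (SUP x\<in>X. gauge (polar m C) x)
      \<and> n \<ge> 1 \<and> prob_space \<mu> \<and> sets \<mu> = sets borel \<and> (AE x in \<mu>. x \<in> X)
      \<longrightarrow> rademacher n \<mu> ((\<lambda>w x. ip m x w) ` {w \<in> vec m. gauge C w \<le> 1})
          \<le> ennreal (K powr (1 / q) * D / real n powr (1 / p))"
proof -
  have pq: "p > 1" "1 < q" "q \<le> 2" "1/p + 1/q = 1"
    using assms by auto
  let ?K = "smoothness_constant (1 / (2 * q * (2 * \<alpha> * p) powr (q - 1)))"
  have "?K > 0"
    unfolding smoothness_constant_def by simp
  with pq \<open>\<alpha> > 0\<close> show ?thesis
    by (intro exI[of _ ?K] conjI allI impI symmetric_convex_body.rademacher_linear_class_le)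
      (auto simp: symmetric_convex_body_def uniformly_convex_def)
qed

end
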